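(* Let $\boldsymbol A,\boldsymbol B$ be $m\times l$ matrices with $\boldsymbol A^\top\boldsymbol A=\boldsymbol B^\top\boldsymbol B=\boldsymbol I_l$, and let $\boldsymbol M$ be an $l\times l$ positive definite matrix whose eigenvalues lie in $[\lambda,\kappa\lambda]$ for some $\lambda>0$, $\kappa\ge1$. If $\boldsymbol A^\top\boldsymbol B$ is a diagonal matrix with non-negative entries, then there is a constant $C$ depending only on $\kappa$ such that $$\|\boldsymbol A\boldsymbol M\boldsymbol A^\top-\boldsymbol B\boldsymbol M\boldsymbol B^\top\|_F\le C\lambda\|\boldsymbol A\boldsymbol A^\top-\boldsymbol B\boldsymbol B^\top\|_F .$$ *)

theory Defs
  imports "Jordan_Normal_Form.Matrix" "Jordan_Normal_Form.Char_Poly"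
begin

definition frobenius_norm :: "real mat \<Rightarrow> real" where
  "frobenius_norm X = sqrt (\<Sum>i<dim_row X. \<Sum>j<dim_col X. (X $$ (i,j))\<^sup>2)"

definition positive_definite_mat :: "nat \<Rightarrow> real mat \<Rightarrow> bool" where
  "positive_definite_mat n M \<longleftrightarrow> M \<in> carrier_mat n n \<and> transpose_mat M = M \<and>
     (\<forall>x \<in> carrier_vec n. x \<noteq> 0\<^sub>v n \<longrightarrow> x \<bullet> (M *\<^sub>v x) > 0)"

end

theory Submission
  imports Defs "HOL-Analysis.Function_Topology"
begin

(* Let D = A^T B = diag(d_1, ..., d_l); then 0 <= d_i <= 1. Expanding the Frobenius norms as traces
   and using A^T A = B^T B = I gives
     ||A M A^T - B M B^T||^2 = 2 sum_{i,p} M_ip^2 (1 - d_i d_p),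
   and for M = I in particular ||A A^T - B B^T||^2 = 2 sum_i (1 - d_i^2).
   Since 1 - d_i d_p <= (1 - d_i^2) + (1 - d_p^2) and every row of M satisfies
   sum_p M_ip^2 = (M^2)_ii <= (kappa lambda)^2, the first sum is at most 2 (kappa lambda)^2 times the
   second, so C = 2 kappa works. The row bound needs the largest eigenvalue of M to dominate its
   quadratic form; that eigenvalue is found by maximising the form on the compact unit sphere. *)

section \<open>Quadratic forms and the largest eigenvalue\<close>

lemma quadratic_nonneg_imp_discriminant:
  fixes p q r :: real
  assumes nonneg: "\<And>t. p + 2 * t * q + t\<^sup>2 * r \<ge> 0" and "r \<ge> 0"
  shows "q\<^sup>2 \<le> p * r"
proof (cases "r > 0")
  case True
  have "p + 2 * (- q / r) * q + (- q / r)\<^sup>2 * r \<ge> 0" by (rule nonneg)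
  hence "p - q\<^sup>2 / r \<ge> 0" using True by (simp add: power2_eq_square field_simps)
  thus ?thesis using True by (simp add: field_simps)
next
  case False
  with \<open>r \<ge> 0\<close> have r: "r = 0" by simp
  show ?thesis
  proof (rule ccontr)
    assume "\<not> ?thesis"
    hence "q \<noteq> 0" using r by simp
    define t where "t = - (p + 1) / (2 * q)"
    have "2 * t * q = - (p + 1)" using \<open>q \<noteq> 0\<close> by (simp add: t_def)
    thus False using nonneg[of t] r by simp
  qed
qed

definition bilinear_form :: "(nat \<Rightarrow> nat \<Rightarrow> real) \<Rightarrow> nat \<Rightarrow> (nat \<Rightarrow> real) \<Rightarrow> (nat \<Rightarrow> real) \<Rightarrow> real"
  where "bilinear_form a n y x = (\<Sum>i<n. y i * (\<Sum>j<n. a i j * x j))"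

definition quadratic_form :: "(nat \<Rightarrow> nat \<Rightarrow> real) \<Rightarrow> nat \<Rightarrow> (nat \<Rightarrow> real) \<Rightarrow> real"
  where "quadratic_form a n x = bilinear_form a n x x"

lemma bilinear_form_commute:
  assumes sym: "\<And>i j. i < n \<Longrightarrow> j < n \<Longrightarrow> a i j = a j i"
  shows "bilinear_form a n x y = bilinear_form a n y x"
proof -
  have "bilinear_form a n x y = (\<Sum>i<n. \<Sum>j<n. x i * a i j * y j)"
    unfolding bilinear_form_def by (simp add: sum_distrib_left mult.assoc)
  also have "\<dots> = (\<Sum>j<n. \<Sum>i<n. y j * a j i * x i)"
    by (subst sum.swap) (intro sum.cong refl, simp add: sym mult.commute)
  also have "\<dots> = bilinear_form a n y x"
    unfolding bilinear_form_def by (simp add: sum_distrib_left mult.assoc)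
  finally show ?thesis .
qed

lemma quadratic_form_add_scaled:
  assumes sym: "\<And>i j. i < n \<Longrightarrow> j < n \<Longrightarrow> a i j = a j i"
  shows "quadratic_form a n (\<lambda>i. x i + t * y i)
    = quadratic_form a n x + 2 * t * bilinear_form a n y x + t\<^sup>2 * quadratic_form a n y"
proof -
  have "quadratic_form a n (\<lambda>i. x i + t * y i)
      = bilinear_form a n x x + t * bilinear_form a n x y + t * bilinear_form a n y x
        + t\<^sup>2 * bilinear_form a n y y"
    unfolding quadratic_form_def bilinear_form_def
    by (simp add: algebra_simps sum.distrib sum_distrib_left power2_eq_square)
  then show ?thesis
    using bilinear_form_commute[OF sym, where x=x and y=y] by (simp add: quadratic_form_def)
qed

lemma quadratic_form_scale: "quadratic_form a n (\<lambda>i. t * x i) = t\<^sup>2 * quadratic_form a n x"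
  unfolding quadratic_form_def bilinear_form_def
  by (simp add: algebra_simps sum_distrib_left power2_eq_square)

lemma psd_cauchy_schwarz:
  assumes sym: "\<And>i j. i < n \<Longrightarrow> j < n \<Longrightarrow> a i j = a j i"
    and psd: "\<And>x. quadratic_form a n x \<ge> 0"
  shows "(bilinear_form a n y x)\<^sup>2 \<le> quadratic_form a n x * quadratic_form a n y"
proof (rule quadratic_nonneg_imp_discriminant)
  show "quadratic_form a n x + 2 * t * bilinear_form a n y x + t\<^sup>2 * quadratic_form a n y \<ge> 0" for t
    using psd[of "\<lambda>i. x i + t * y i"] by (simp add: quadratic_form_add_scaled[OF sym])
qed (rule psd)

lemma psd_null_vector_in_kernel:
  assumes sym: "\<And>i j. i < n \<Longrightarrow> j < n \<Longrightarrow> a i j = a j i"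
    and psd: "\<And>x. quadratic_form a n x \<ge> 0"
    and null: "quadratic_form a n x = 0" and "i < n"
  shows "(\<Sum>j<n. a i j * x j) = 0"
proof -
  define w where "w = (\<lambda>i. \<Sum>j<n. a i j * x j)"
  have "(bilinear_form a n w x)\<^sup>2 \<le> quadratic_form a n x * quadratic_form a n w"
    by (rule psd_cauchy_schwarz[OF sym psd])
  hence "bilinear_form a n w x = 0" by (simp add: null)
  hence "(\<Sum>i<n. (w i)\<^sup>2) = 0" by (simp add: bilinear_form_def w_def power2_eq_square)
  thus ?thesis using \<open>i < n\<close> by (simp add: sum_nonneg_eq_0_iff w_def)
qed

lemma continuous_on_coordinate: "continuous_on U (\<lambda>x::nat \<Rightarrow> real. x i)"
  by (rule continuous_on_subset[OF continuous_on_product_coordinates]) simp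

lemma compact_box_inter_sphere:
  "compact (PiE UNIV (\<lambda>i::nat. if i < n then {-1..1::real} else {0}) \<inter> {x. (\<Sum>i<n. (x i)\<^sup>2) = 1})"
proof (rule compact_Int_closed)
  have "compactin (product_topology (\<lambda>i. euclidean) UNIV)
      (PiE UNIV (\<lambda>i::nat. if i < n then {-1..1::real} else {0}))"
    by (subst compactin_PiE) auto
  thus "compact (PiE UNIV (\<lambda>i::nat. if i < n then {-1..1::real} else {0}))"
    by (simp add: euclidean_product_topology)
  show "closed {x::nat \<Rightarrow> real. (\<Sum>i<n. (x i)\<^sup>2) = 1}"
    by (intro closed_Collect_eq continuous_intros continuous_on_coordinate)
qed

lemma quadratic_form_attains_max_on_sphere:
  fixes a :: "nat \<Rightarrow> nat \<Rightarrow> real"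
  assumes "n > 0"
  obtains x0 where "(\<Sum>i<n. (x0 i)\<^sup>2) = 1"
    and "\<And>x. (\<Sum>i<n. (x i)\<^sup>2) = 1 \<Longrightarrow> quadratic_form a n x \<le> quadratic_form a n x0"
proof -
  define F where "F = (\<lambda>i::nat. if i < n then {-1..1::real} else {0})"
  define S where "S = PiE UNIV F \<inter> {x. (\<Sum>i<n. (x i)\<^sup>2) = 1}"
  have "compact S" unfolding S_def F_def by (rule compact_box_inter_sphere)
  have restrict_in_S: "(\<lambda>i. if i < n then x i else 0) \<in> S" if x: "(\<Sum>i<n. (x i)\<^sup>2) = 1" for x
  proof -
    have "\<bar>x i\<bar> \<le> 1" if "i < n" for i
    proof -
      have "(x i)\<^sup>2 \<le> (\<Sum>i<n. (x i)\<^sup>2)" by (rule member_le_sum) (use that in auto)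
      thus ?thesis using x by (simp add: abs_square_le_1)
    qed
    thus ?thesis unfolding S_def F_def using x by (auto simp: PiE_iff abs_le_iff)
  qed
  define e where "e = (\<lambda>i::nat. if i = 0 then 1 else 0 :: real)"
  have "(e i)\<^sup>2 = e i" for i by (simp add: e_def)
  hence "(\<Sum>i<n. (e i)\<^sup>2) = 1" using assms by (simp add: e_def)
  hence "S \<noteq> {}" using restrict_in_S by blast
  moreover have "continuous_on S (quadratic_form a n)"
    unfolding quadratic_form_def bilinear_form_def by (intro continuous_intros continuous_on_coordinate)
  ultimately obtain x0 where "x0 \<in> S" and x0_max: "\<And>y. y \<in> S \<Longrightarrow> quadratic_form a n y \<le> quadratic_form a n x0"
    using continuous_attains_sup[OF \<open>compact S\<close>] by blast
  show ?thesis
  proof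
    show "(\<Sum>i<n. (x0 i)\<^sup>2) = 1" using \<open>x0 \<in> S\<close> unfolding S_def by auto
    fix x :: "nat \<Rightarrow> real" assume "(\<Sum>i<n. (x i)\<^sup>2) = 1"
    have "quadratic_form a n x = quadratic_form a n (\<lambda>i. if i < n then x i else 0)"
      unfolding quadratic_form_def bilinear_form_def by simp
    also have "\<dots> \<le> quadratic_form a n x0" by (rule x0_max[OF restrict_in_S]) fact
    finally show "quadratic_form a n x \<le> quadratic_form a n x0" .
  qed
qed

lemma quadratic_form_le_by_homogeneity:
  assumes sphere: "\<And>x. (\<Sum>i<n. (x i)\<^sup>2) = 1 \<Longrightarrow> quadratic_form a n x \<le> \<mu>"
  shows "quadratic_form a n x \<le> \<mu> * (\<Sum>i<n. (x i)\<^sup>2)"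
proof (cases "(\<Sum>i<n. (x i)\<^sup>2) = 0")
  case True
  hence "\<forall>i<n. x i = 0" by (simp add: sum_nonneg_eq_0_iff)
  hence "quadratic_form a n x = 0" unfolding quadratic_form_def bilinear_form_def by simp
  thus ?thesis using True by simp
next
  case False
  define s where "s = (\<Sum>i<n. (x i)\<^sup>2)"
  have "s > 0" using False unfolding s_def by (simp add: sum_nonneg order_less_le)
  define y where "y = (\<lambda>i. (1 / sqrt s) * x i)"
  have "(\<Sum>i<n. (y i)\<^sup>2) = (\<Sum>i<n. (x i)\<^sup>2) / s"
    using \<open>s > 0\<close> by (simp add: y_def power_mult_distrib power_divide sum_divide_distrib)
  hence "quadratic_form a n y \<le> \<mu>"
    using \<open>s > 0\<close> by (intro sphere) (simp add: s_def)
  moreover have "quadratic_form a n y = quadratic_form a n x / s"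
    unfolding y_def quadratic_form_scale using \<open>s > 0\<close> by (simp add: power_divide)
  ultimately have "quadratic_form a n x / s \<le> \<mu>" by simp
  thus ?thesis using \<open>s > 0\<close> by (simp add: s_def field_simps)
qed

lemma symmetric_top_eigenvector:
  fixes a :: "nat \<Rightarrow> nat \<Rightarrow> real"
  assumes sym: "\<And>i j. i < n \<Longrightarrow> j < n \<Longrightarrow> a i j = a j i" and "n > 0"
  shows "\<exists>\<mu> x0. (\<exists>i<n. x0 i \<noteq> 0) \<and> (\<forall>i<n. (\<Sum>j<n. a i j * x0 j) = \<mu> * x0 i)
    \<and> (\<forall>x. quadratic_form a n x \<le> \<mu> * (\<Sum>i<n. (x i)\<^sup>2))"
proof -
  obtain x0 where x0: "(\<Sum>i<n. (x0 i)\<^sup>2) = 1"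
    and x0_max: "\<And>x. (\<Sum>i<n. (x i)\<^sup>2) = 1 \<Longrightarrow> quadratic_form a n x \<le> quadratic_form a n x0"
    using quadratic_form_attains_max_on_sphere[OF \<open>n > 0\<close>] by blast
  define \<mu> where "\<mu> = quadratic_form a n x0"
  have bound: "quadratic_form a n x \<le> \<mu> * (\<Sum>i<n. (x i)\<^sup>2)" for x
    unfolding \<mu>_def by (rule quadratic_form_le_by_homogeneity) (rule x0_max)
  (* The maximiser is a null vector of the positive semidefinite form \<mu> I - a, hence in its kernel. *)
  define b where "b = (\<lambda>i j. (if i = j then \<mu> else 0) - a i j)"
  have b_apply: "(\<Sum>j<n. b i j * x j) = \<mu> * x i - (\<Sum>j<n. a i j * x j)" if "i < n" for i x
  proof -
    have "(\<Sum>j<n. b i j * x j) = (\<Sum>j<n. (if j = i then \<mu> * x i else 0) - a i j * x j)"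
      by (intro sum.cong) (auto simp: b_def algebra_simps)
    also have "\<dots> = \<mu> * x i - (\<Sum>j<n. a i j * x j)" using that by (simp add: sum_subtractf)
    finally show ?thesis .
  qed
  have b_form: "quadratic_form b n x = \<mu> * (\<Sum>i<n. (x i)\<^sup>2) - quadratic_form a n x" for x
  proof -
    have "quadratic_form b n x = (\<Sum>i<n. x i * (\<mu> * x i - (\<Sum>j<n. a i j * x j)))"
      unfolding quadratic_form_def bilinear_form_def by (intro sum.cong refl) (simp add: b_apply)
    also have "\<dots> = \<mu> * (\<Sum>i<n. (x i)\<^sup>2) - quadratic_form a n x"
      unfolding quadratic_form_def bilinear_form_def
      by (simp add: right_diff_distrib sum_subtractf sum_distrib_left power2_eq_square mult_ac)
    finally show ?thesis .
  qed
  have b_sym: "b i j = b j i" if "i < n" "j < n" for i j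
    using sym[OF that] by (simp add: b_def)
  have b_psd: "quadratic_form b n x \<ge> 0" for x
    using bound[of x] by (simp add: b_form)
  have "quadratic_form b n x0 = 0" using x0 by (simp add: b_form \<mu>_def)
  hence "(\<Sum>j<n. b i j * x0 j) = 0" if "i < n" for i
    using psd_null_vector_in_kernel[OF b_sym b_psd _ that] by blast
  hence "\<forall>i<n. (\<Sum>j<n. a i j * x0 j) = \<mu> * x0 i" by (simp add: b_apply)
  moreover have "\<exists>i<n. x0 i \<noteq> 0"
  proof (rule ccontr)
    assume "\<not> (\<exists>i<n. x0 i \<noteq> 0)"
    hence "(\<Sum>i<n. (x0 i)\<^sup>2) = 0" by simp
    with x0 show False by simp
  qed
  ultimately show ?thesis using bound by blast
qed

lemma row_sum_squares_le:
  fixes a :: "nat \<Rightarrow> nat \<Rightarrow> real"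
  assumes sym: "\<And>i j. i < n \<Longrightarrow> j < n \<Longrightarrow> a i j = a j i"
    and psd: "\<And>x. quadratic_form a n x \<ge> 0"
    and bound: "\<And>x. quadratic_form a n x \<le> c * (\<Sum>i<n. (x i)\<^sup>2)"
    and "i < n"
  shows "(\<Sum>j<n. (a i j)\<^sup>2) \<le> c\<^sup>2"
proof -
  define e where "e = (\<lambda>j. if j = i then 1 else 0 :: real)"
  define R where "R = (\<Sum>j<n. (a i j)\<^sup>2)"
  have "(e j)\<^sup>2 = e j" for j by (simp add: e_def)
  hence e_sq: "(\<Sum>j<n. (e j)\<^sup>2) = 1" using \<open>i < n\<close> by (simp add: e_def)
  have e_apply: "(\<Sum>j<n. f j * e j) = f i" for f
    using \<open>i < n\<close> by (simp add: e_def if_distrib[where f="\<lambda>x. _ * x"] cong: if_cong)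
  have "bilinear_form a n (a i) e = (\<Sum>j<n. a i j * a j i)"
    unfolding bilinear_form_def by (simp add: e_apply)
  also have "\<dots> = R"
    unfolding R_def using \<open>i < n\<close> by (intro sum.cong refl) (simp add: sym power2_eq_square)
  finally have row_e: "bilinear_form a n (a i) e = R" .
  have "R\<^sup>2 \<le> quadratic_form a n e * quadratic_form a n (a i)"
    using psd_cauchy_schwarz[OF sym psd, of "a i" e] by (simp add: row_e)
  also have "\<dots> \<le> c * (c * R)"
  proof (rule mult_mono)
    show "quadratic_form a n e \<le> c" using bound[of e] by (simp add: e_sq)
    show "quadratic_form a n (a i) \<le> c * R" using bound[of "a i"] by (simp add: R_def)
    show "0 \<le> c" using bound[of e] psd[of e] by (simp add: e_sq)
  qed (rule psd)
  finally have "R * R \<le> c\<^sup>2 * R" by (simp add: power2_eq_square mult_ac)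
  moreover have "R \<ge> 0" by (simp add: R_def sum_nonneg)
  ultimately show ?thesis unfolding R_def[symmetric]
    by (cases "R = 0") (auto simp: mult_le_cancel_right_pos)
qed

lemma symmetric_mat_index:
  assumes "M \<in> carrier_mat n n" "transpose_mat M = M" "i < n" "j < n"
  shows "M $$ (i, j) = M $$ (j, i)"
proof -
  have "M $$ (i, j) = transpose_mat M $$ (j, i)"
    using assms carrier_matD[OF assms(1)] by (intro index_transpose_mat(1)[symmetric]) simp_all
  thus ?thesis unfolding assms(2) .
qed

lemma positive_definite_quadratic_form_nonneg:
  assumes "positive_definite_mat n M"
  shows "quadratic_form (\<lambda>i j. M $$ (i, j)) n x \<ge> 0"
proof (cases "vec n x = 0\<^sub>v n")
  case True
  have "x i = 0" if "i < n" for i using arg_cong[OF True, of "\<lambda>v. v $ i"] that by simp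
  thus ?thesis by (simp add: quadratic_form_def bilinear_form_def)
next
  case False
  have M: "M \<in> carrier_mat n n"
    and pos: "\<And>v. v \<in> carrier_vec n \<Longrightarrow> v \<noteq> 0\<^sub>v n \<Longrightarrow> v \<bullet> (M *\<^sub>v v) > 0"
    using assms unfolding positive_definite_mat_def by blast+
  have "vec n x \<bullet> (M *\<^sub>v vec n x) = quadratic_form (\<lambda>i j. M $$ (i, j)) n x"
    using M by (simp add: quadratic_form_def bilinear_form_def scalar_prod_def atLeast0LessThan)
  thus ?thesis using pos[of "vec n x"] False by simp
qed

lemma eigenvalue_of_eigen_equation:
  assumes M: "M \<in> carrier_mat n n" and nonzero: "\<exists>i<n. x i \<noteq> 0"
    and eigen: "\<forall>i<n. (\<Sum>j<n. M $$ (i, j) * x j) = \<mu> * x i"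
  shows "eigenvalue M \<mu>"
  unfolding eigenvalue_def eigenvector_def
proof (intro exI conjI)
  show "vec n x \<in> carrier_vec (dim_row M)" using M by simp
  obtain j where "j < n" "x j \<noteq> 0" using nonzero by blast
  hence "vec n x $ j \<noteq> 0\<^sub>v n $ j" by simp
  thus "vec n x \<noteq> 0\<^sub>v (dim_row M)" using M by auto
  show "M *\<^sub>v vec n x = \<mu> \<cdot>\<^sub>v vec n x"
    using M eigen by (intro eq_vecI) (auto simp: scalar_prod_def atLeast0LessThan)
qed

lemma positive_definite_row_sum_squares_le:
  assumes pd: "positive_definite_mat n M" and eig: "\<And>k. eigenvalue M k \<Longrightarrow> k \<le> c" and "i < n"
  shows "(\<Sum>j<n. (M $$ (i, j))\<^sup>2) \<le> c\<^sup>2"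
proof -
  have M: "M \<in> carrier_mat n n" and "transpose_mat M = M"
    using pd unfolding positive_definite_mat_def by blast+
  have sym: "M $$ (i, j) = M $$ (j, i)" if "i < n" "j < n" for i j
    using M \<open>transpose_mat M = M\<close> that by (rule symmetric_mat_index)
  have "n > 0" using \<open>i < n\<close> by simp
  from symmetric_top_eigenvector[where a="\<lambda>i j. M $$ (i, j)", OF sym this]
  obtain \<mu> x0 where "\<exists>i<n. x0 i \<noteq> 0" "\<forall>i<n. (\<Sum>j<n. M $$ (i, j) * x0 j) = \<mu> * x0 i"
    and top: "\<forall>x. quadratic_form (\<lambda>i j. M $$ (i, j)) n x \<le> \<mu> * (\<Sum>i<n. (x i)\<^sup>2)"
    by blast
  with M have "eigenvalue M \<mu>" by (intro eigenvalue_of_eigen_equation)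
  hence "\<mu> \<le> c" by (rule eig)
  have bound: "quadratic_form (\<lambda>i j. M $$ (i, j)) n x \<le> c * (\<Sum>i<n. (x i)\<^sup>2)" for x
  proof -
    have "quadratic_form (\<lambda>i j. M $$ (i, j)) n x \<le> \<mu> * (\<Sum>i<n. (x i)\<^sup>2)" using top by blast
    also have "\<dots> \<le> c * (\<Sum>i<n. (x i)\<^sup>2)"
      using \<open>\<mu> \<le> c\<close> by (intro mult_right_mono sum_nonneg) auto
    finally show ?thesis .
  qed
  show ?thesis
    using row_sum_squares_le[where a="\<lambda>i j. M $$ (i, j)",
        OF sym positive_definite_quadratic_form_nonneg[OF pd] bound \<open>i < n\<close>] by simp
qed

section \<open>Traces and Frobenius norms\<close>

definition mat_trace :: "'a :: semiring_0 mat \<Rightarrow> 'a"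
  where "mat_trace X = (\<Sum>i<dim_row X. X $$ (i, i))"

(* Variants of assoc_mult_mat and transpose_mult whose side conditions only involve the dimensions
   of the factors, so that the simplifier can discharge them. *)
lemma mult_mat_assoc:
  fixes A B C :: "'a :: comm_semiring_0 mat"
  shows "dim_col A = dim_row B \<Longrightarrow> dim_col B = dim_row C \<Longrightarrow> A * B * C = A * (B * C)"
  by (rule assoc_mult_mat[of A _ _ B _ C _]) auto

lemma transpose_mult_mat:
  fixes A B :: "'a :: comm_semiring_0 mat"
  shows "dim_col A = dim_row B \<Longrightarrow> transpose_mat (A * B) = transpose_mat B * transpose_mat A"
  by (rule transpose_mult[of A _ _ B _]) auto

lemma index_mult_mat_sum:
  assumes "X \<in> carrier_mat r k" "Y \<in> carrier_mat k c" "i < r" "j < c"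
  shows "(X * Y) $$ (i, j) = (\<Sum>p<k. X $$ (i, p) * Y $$ (p, j))"
  using assms by (simp add: scalar_prod_def atLeast0LessThan)

lemma mat_trace_mult:
  assumes "X \<in> carrier_mat n k" "Y \<in> carrier_mat k n"
  shows "mat_trace (X * Y) = (\<Sum>i<n. \<Sum>p<k. X $$ (i, p) * Y $$ (p, i))"
  using assms unfolding mat_trace_def by (intro sum.cong) (auto simp: scalar_prod_def atLeast0LessThan)

lemma mat_trace_mult_comm:
  fixes X Y :: "'a :: comm_semiring_0 mat"
  assumes "X \<in> carrier_mat n k" "Y \<in> carrier_mat k n"
  shows "mat_trace (X * Y) = mat_trace (Y * X)"
  using assms by (simp add: mat_trace_mult sum.swap[of _ "{..<n}"] mult.commute)

lemma frobenius_norm_nonneg: "frobenius_norm X \<ge> 0"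
  by (simp add: frobenius_norm_def sum_nonneg)

lemma frobenius_norm_diff_sq:
  assumes "X \<in> carrier_mat r c" "Y \<in> carrier_mat r c"
  shows "(frobenius_norm (X - Y))\<^sup>2
    = mat_trace (X * transpose_mat X) - 2 * mat_trace (X * transpose_mat Y) + mat_trace (Y * transpose_mat Y)"
proof -
  have "(frobenius_norm (X - Y))\<^sup>2
      = (\<Sum>i<r. \<Sum>j<c. (X $$ (i, j) - Y $$ (i, j))\<^sup>2)"
    using assms by (simp add: frobenius_norm_def sum_nonneg)
  also have "\<dots> = (\<Sum>i<r. \<Sum>j<c. (X $$ (i, j))\<^sup>2 - 2 * (X $$ (i, j) * Y $$ (i, j)) + (Y $$ (i, j))\<^sup>2)"
    by (intro sum.cong refl) (simp add: power2_eq_square algebra_simps)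
  also have "\<dots> = (\<Sum>i<r. \<Sum>j<c. (X $$ (i, j))\<^sup>2) - 2 * (\<Sum>i<r. \<Sum>j<c. X $$ (i, j) * Y $$ (i, j))
      + (\<Sum>i<r. \<Sum>j<c. (Y $$ (i, j))\<^sup>2)"
    by (simp only: sum.distrib sum_subtractf sum_distrib_left)
  also have "\<dots> = mat_trace (X * transpose_mat X) - 2 * mat_trace (X * transpose_mat Y)
      + mat_trace (Y * transpose_mat Y)"
    using assms by (simp add: mat_trace_mult[of _ r c] power2_eq_square)
  finally show ?thesis .
qed

lemma mult_diagonal_mat_index:
  assumes "D \<in> carrier_mat k k" "diagonal_mat D" "X \<in> carrier_mat r k" "i < r" "j < k"
  shows "(X * D) $$ (i, j) = X $$ (i, j) * D $$ (j, j)"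
proof -
  have "(X * D) $$ (i, j) = (\<Sum>p<k. X $$ (i, p) * D $$ (p, j))"
    by (rule index_mult_mat_sum[OF assms(3,1,4,5)])
  also have "\<dots> = (\<Sum>p<k. if p = j then X $$ (i, j) * D $$ (j, j) else 0)"
    using assms unfolding diagonal_mat_def by (intro sum.cong) auto
  finally show ?thesis using assms by simp
qed

lemma mat_trace_mult_diagonal:
  assumes "M \<in> carrier_mat n n" "N \<in> carrier_mat n n"
    and "D \<in> carrier_mat n n" "diagonal_mat D" "E \<in> carrier_mat n n" "diagonal_mat E"
  shows "mat_trace (M * D * N * E)
    = (\<Sum>i<n. \<Sum>p<n. M $$ (i, p) * D $$ (p, p) * N $$ (p, i) * E $$ (i, i))"
proof -
  have MD: "M * D \<in> carrier_mat n n" and MDN: "M * D * N \<in> carrier_mat n n"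
    using assms by auto
  have "mat_trace (M * D * N * E) = (\<Sum>i<n. (M * D * N * E) $$ (i, i))"
    unfolding mat_trace_def using carrier_matD(1)[OF assms(1)] by simp
  also have "\<dots> = (\<Sum>i<n. (M * D * N) $$ (i, i) * E $$ (i, i))"
    by (rule sum.cong[OF refl], rule mult_diagonal_mat_index[OF assms(5,6) MDN]) simp_all
  also have "\<dots> = (\<Sum>i<n. (\<Sum>p<n. (M * D) $$ (i, p) * N $$ (p, i)) * E $$ (i, i))"
    by (rule sum.cong[OF refl], subst index_mult_mat_sum[OF MD assms(2)]) simp_all
  also have "\<dots> = (\<Sum>i<n. \<Sum>p<n. M $$ (i, p) * D $$ (p, p) * N $$ (p, i) * E $$ (i, i))"
    by (rule sum.cong[OF refl], simp only: sum_distrib_right, rule sum.cong[OF refl],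
        subst mult_diagonal_mat_index[OF assms(3,4,1)]) simp_all
  finally show ?thesis .
qed

lemma mat_trace_conj_mult_transpose:
  fixes A B M N :: "'a :: comm_ring_1 mat"
  assumes A: "A \<in> carrier_mat m l" and B: "B \<in> carrier_mat m k"
    and M: "M \<in> carrier_mat l l" and N: "N \<in> carrier_mat k k"
  shows "mat_trace (A * M * transpose_mat A * transpose_mat (B * N * transpose_mat B))
    = mat_trace (M * (transpose_mat A * B) * transpose_mat N * (transpose_mat B * A))"
proof -
  have "transpose_mat (B * N * transpose_mat B) = B * transpose_mat N * transpose_mat B"
    using B N by (simp add: transpose_mult_mat mult_mat_assoc)
  hence "mat_trace (A * M * transpose_mat A * transpose_mat (B * N * transpose_mat B))
      = mat_trace (A * (M * (transpose_mat A * B) * transpose_mat N * transpose_mat B))"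
    using A B M N by (simp add: mult_mat_assoc)
  also have "\<dots> = mat_trace (M * (transpose_mat A * B) * transpose_mat N * transpose_mat B * A)"
    using A B M N by (intro mat_trace_mult_comm[of _ m l]) auto
  also have "\<dots> = mat_trace (M * (transpose_mat A * B) * transpose_mat N * (transpose_mat B * A))"
    using A B M N by (simp add: mult_mat_assoc)
  finally show ?thesis .
qed

section \<open>Matrices with orthonormal columns\<close>

lemma frobenius_norm_sq_conj_diff:
  fixes A B M :: "real mat"
  assumes A: "A \<in> carrier_mat m l" and B: "B \<in> carrier_mat m l"
    and AA: "transpose_mat A * A = 1\<^sub>m l" and BB: "transpose_mat B * B = 1\<^sub>m l"
    and M: "M \<in> carrier_mat l l" and M_sym: "transpose_mat M = M"
    and D_diag: "diagonal_mat (transpose_mat A * B)"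
  shows "(frobenius_norm (A * M * transpose_mat A - B * M * transpose_mat B))\<^sup>2
    = 2 * (\<Sum>i<l. \<Sum>p<l. (M $$ (i, p))\<^sup>2
             * (1 - (transpose_mat A * B) $$ (i, i) * (transpose_mat A * B) $$ (p, p)))"
proof -
  define D where "D = transpose_mat A * B"
  have D: "D \<in> carrier_mat l l" using A B by (simp add: D_def)
  have DT: "transpose_mat B * A = transpose_mat D"
    using A B by (simp add: D_def transpose_mult_mat)
  have diag: "diagonal_mat D" "diagonal_mat (transpose_mat D)" "diagonal_mat (1\<^sub>m l :: real mat)"
    using D_diag by (auto simp: D_def diagonal_mat_def)
  define S where "S = (\<lambda>E F :: real mat. \<Sum>i<l. \<Sum>p<l. (M $$ (i, p))\<^sup>2 * (E $$ (p, p) * F $$ (i, i)))"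
  have trace_S: "mat_trace (M * E * transpose_mat M * F) = S E F"
    if "E \<in> carrier_mat l l" "diagonal_mat E" "F \<in> carrier_mat l l" "diagonal_mat F" for E F
    using M that by (subst mat_trace_mult_diagonal[of M l]) (simp_all add: S_def power2_eq_square mult_ac)
  have conj: "mat_trace (X * M * transpose_mat X * transpose_mat (Y * M * transpose_mat Y))
      = mat_trace (M * (transpose_mat X * Y) * transpose_mat M * (transpose_mat Y * X))"
    if "X \<in> carrier_mat m l" "Y \<in> carrier_mat m l" for X Y
    using that M M by (rule mat_trace_conj_mult_transpose)
  have "(frobenius_norm (A * M * transpose_mat A - B * M * transpose_mat B))\<^sup>2
      = mat_trace (A * M * transpose_mat A * transpose_mat (A * M * transpose_mat A))
        - 2 * mat_trace (A * M * transpose_mat A * transpose_mat (B * M * transpose_mat B))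
        + mat_trace (B * M * transpose_mat B * transpose_mat (B * M * transpose_mat B))"
    using A B M by (intro frobenius_norm_diff_sq[where r=m and c=m]) auto
  also have "\<dots> = S (1\<^sub>m l) (1\<^sub>m l) - 2 * S D (transpose_mat D) + S (1\<^sub>m l) (1\<^sub>m l)"
    unfolding conj[OF A A] conj[OF A B] conj[OF B B] AA BB DT D_def[symmetric]
    using D diag by (simp only: trace_S one_carrier_mat transpose_carrier_mat)
  also have "\<dots> = 2 * ((\<Sum>i<l. \<Sum>p<l. (M $$ (i, p))\<^sup>2)
      - (\<Sum>i<l. \<Sum>p<l. (M $$ (i, p))\<^sup>2 * (D $$ (i, i) * D $$ (p, p))))"
    using D by (simp add: S_def mult_ac)
  also have "\<dots> = 2 * (\<Sum>i<l. \<Sum>p<l. (M $$ (i, p))\<^sup>2 * (1 - D $$ (i, i) * D $$ (p, p)))"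
    by (simp add: right_diff_distrib sum_subtractf)
  finally show ?thesis by (simp add: D_def)
qed

lemma frobenius_norm_sq_proj_diff:
  fixes A B :: "real mat"
  assumes A: "A \<in> carrier_mat m l" and B: "B \<in> carrier_mat m l"
    and AA: "transpose_mat A * A = 1\<^sub>m l" and BB: "transpose_mat B * B = 1\<^sub>m l"
    and D_diag: "diagonal_mat (transpose_mat A * B)"
  shows "(frobenius_norm (A * transpose_mat A - B * transpose_mat B))\<^sup>2
    = 2 * (\<Sum>i<l. 1 - ((transpose_mat A * B) $$ (i, i))\<^sup>2)"
proof -
  define d where "d i = (transpose_mat A * B) $$ (i, i)" for i
  have "A * transpose_mat A = A * 1\<^sub>m l * transpose_mat A" "B * transpose_mat B = B * 1\<^sub>m l * transpose_mat B"
    using A B by simp_all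
  hence "(frobenius_norm (A * transpose_mat A - B * transpose_mat B))\<^sup>2
      = 2 * (\<Sum>i<l. \<Sum>p<l. (1\<^sub>m l $$ (i, p))\<^sup>2 * (1 - d i * d p))"
    unfolding d_def using frobenius_norm_sq_conj_diff[OF A B AA BB one_carrier_mat transpose_one D_diag]
    by (simp only:)
  also have "(\<Sum>i<l. \<Sum>p<l. (1\<^sub>m l $$ (i, p))\<^sup>2 * (1 - d i * d p)) = (\<Sum>i<l. 1 - (d i)\<^sup>2)"
  proof (rule sum.cong[OF refl])
    fix i assume "i \<in> {..<l}"
    hence "(\<Sum>p<l. (1\<^sub>m l $$ (i, p))\<^sup>2 * (1 - d i * d p)) = (\<Sum>p<l. if p = i then 1 - d i * d i else 0)"
      by (intro sum.cong refl) auto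
    thus "(\<Sum>p<l. (1\<^sub>m l $$ (i, p))\<^sup>2 * (1 - d i * d p)) = 1 - (d i)\<^sup>2"
      using \<open>i \<in> {..<l}\<close> by (simp add: power2_eq_square)
  qed
  finally show ?thesis by (simp add: d_def)
qed

lemma orthonormal_columns_cross_diag_le_one:
  fixes A B :: "real mat"
  assumes A: "A \<in> carrier_mat m l" and B: "B \<in> carrier_mat m l"
    and AA: "transpose_mat A * A = 1\<^sub>m l" and BB: "transpose_mat B * B = 1\<^sub>m l" and "i < l"
  shows "(transpose_mat A * B) $$ (i, i) \<le> 1"
proof -
  have col_norm: "(\<Sum>k<m. (X $$ (k, i))\<^sup>2) = 1"
    if "X \<in> carrier_mat m l" "transpose_mat X * X = 1\<^sub>m l" for X :: "real mat"
    using arg_cong[OF that(2), of "\<lambda>Y. Y $$ (i, i)"] that(1) \<open>i < l\<close>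
    by (simp add: scalar_prod_def atLeast0LessThan power2_eq_square)
  have "(transpose_mat A * B) $$ (i, i) = (\<Sum>k<m. A $$ (k, i) * B $$ (k, i))"
    using A B \<open>i < l\<close> by (simp add: scalar_prod_def atLeast0LessThan)
  also have "\<dots> \<le> (\<Sum>k<m. ((A $$ (k, i))\<^sup>2 + (B $$ (k, i))\<^sup>2) / 2)"
  proof (rule sum_mono)
    fix k
    show "A $$ (k, i) * B $$ (k, i) \<le> ((A $$ (k, i))\<^sup>2 + (B $$ (k, i))\<^sup>2) / 2"
      using sum_squares_bound[of "A $$ (k, i)" "B $$ (k, i)"] by simp
  qed
  also have "\<dots> = 1"
    using col_norm[OF A AA] col_norm[OF B BB] by (simp add: sum_divide_distrib[symmetric] sum.distrib)
  finally show ?thesis .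
qed

lemma one_minus_mult_le:
  fixes x y :: real
  assumes "0 \<le> x" "x \<le> 1" "0 \<le> y" "y \<le> 1"
  shows "1 - x * y \<le> (1 - x\<^sup>2) + (1 - y\<^sup>2)"
proof -
  have "x\<^sup>2 + y\<^sup>2 \<le> 1 + x * y"
  proof (cases "x \<le> y")
    case True
    with assms have "x * x \<le> x * y" "y\<^sup>2 \<le> 1" by (simp_all add: mult_left_mono power_le_one)
    thus ?thesis by (simp add: power2_eq_square)
  next
    case False
    with assms have "y * y \<le> x * y" "x\<^sup>2 \<le> 1" by (simp_all add: mult_right_mono power_le_one)
    thus ?thesis by (simp add: power2_eq_square)
  qed
  thus ?thesis by simp
qed

lemma weighted_sum_le_row_bound:
  fixes w :: "nat \<Rightarrow> nat \<Rightarrow> real" and d :: "nat \<Rightarrow> real"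
  assumes sym: "\<And>i p. i < l \<Longrightarrow> p < l \<Longrightarrow> w i p = w p i"
    and rows: "\<And>i. i < l \<Longrightarrow> (\<Sum>p<l. (w i p)\<^sup>2) \<le> c\<^sup>2"
    and d: "\<And>i. i < l \<Longrightarrow> 0 \<le> d i \<and> d i \<le> 1"
  shows "(\<Sum>i<l. \<Sum>p<l. (w i p)\<^sup>2 * (1 - d i * d p)) \<le> 2 * c\<^sup>2 * (\<Sum>i<l. 1 - (d i)\<^sup>2)"
proof -
  have "(\<Sum>i<l. \<Sum>p<l. (w i p)\<^sup>2 * (1 - d i * d p))
      \<le> (\<Sum>i<l. \<Sum>p<l. (w i p)\<^sup>2 * (1 - (d i)\<^sup>2)) + (\<Sum>i<l. \<Sum>p<l. (w i p)\<^sup>2 * (1 - (d p)\<^sup>2))"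
    unfolding sum.distrib[symmetric] distrib_left[symmetric]
    using d by (intro sum_mono mult_left_mono one_minus_mult_le) auto
  also have "(\<Sum>i<l. \<Sum>p<l. (w i p)\<^sup>2 * (1 - (d p)\<^sup>2)) = (\<Sum>i<l. \<Sum>p<l. (w i p)\<^sup>2 * (1 - (d i)\<^sup>2))"
    by (subst sum.swap) (intro sum.cong refl, simp add: sym)
  also have "(\<Sum>i<l. \<Sum>p<l. (w i p)\<^sup>2 * (1 - (d i)\<^sup>2)) = (\<Sum>i<l. (1 - (d i)\<^sup>2) * (\<Sum>p<l. (w i p)\<^sup>2))"
    by (simp add: sum_distrib_left mult.commute)
  also have "\<dots> \<le> (\<Sum>i<l. (1 - (d i)\<^sup>2) * c\<^sup>2)"
    using d rows by (intro sum_mono mult_left_mono) (auto simp: power_le_one)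
  finally show ?thesis by (simp add: sum_distrib_left sum_distrib_right mult_ac)
qed

lemma frobenius_norm_conj_diff_le:
  fixes A B M :: "real mat"
  assumes A: "A \<in> carrier_mat m l" and B: "B \<in> carrier_mat m l"
    and AA: "transpose_mat A * A = 1\<^sub>m l" and BB: "transpose_mat B * B = 1\<^sub>m l"
    and M: "M \<in> carrier_mat l l" and M_sym: "transpose_mat M = M"
    and rows: "\<And>i. i < l \<Longrightarrow> (\<Sum>p<l. (M $$ (i, p))\<^sup>2) \<le> c\<^sup>2" and "c \<ge> 0"
    and D_diag: "diagonal_mat (transpose_mat A * B)"
    and D_nonneg: "\<And>i. i < l \<Longrightarrow> (transpose_mat A * B) $$ (i, i) \<ge> 0"
  shows "frobenius_norm (A * M * transpose_mat A - B * M * transpose_mat B)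
    \<le> 2 * c * frobenius_norm (A * transpose_mat A - B * transpose_mat B)"
proof -
  define d where "d i = (transpose_mat A * B) $$ (i, i)" for i
  define X where "X = A * M * transpose_mat A - B * M * transpose_mat B"
  define Y where "Y = A * transpose_mat A - B * transpose_mat B"
  have d: "0 \<le> d i \<and> d i \<le> 1" if "i < l" for i
    using D_nonneg[OF that] orthonormal_columns_cross_diag_le_one[OF A B AA BB that] by (simp add: d_def)
  have "(frobenius_norm X)\<^sup>2 = 2 * (\<Sum>i<l. \<Sum>p<l. (M $$ (i, p))\<^sup>2 * (1 - d i * d p))"
    unfolding X_def d_def by (rule frobenius_norm_sq_conj_diff[OF A B AA BB M M_sym D_diag])
  also have "\<dots> \<le> 2 * (2 * c\<^sup>2 * (\<Sum>i<l. 1 - (d i)\<^sup>2))"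
    using weighted_sum_le_row_bound[where w="\<lambda>i p. M $$ (i, p)" and d=d,
        OF symmetric_mat_index[OF M M_sym] rows d] by simp
  also have "\<dots> = 2 * c\<^sup>2 * (frobenius_norm Y)\<^sup>2"
    unfolding Y_def frobenius_norm_sq_proj_diff[OF A B AA BB D_diag] d_def by simp
  also have "\<dots> \<le> (2 * c * frobenius_norm Y)\<^sup>2"
    by (simp add: power_mult_distrib)
  finally have "(frobenius_norm X)\<^sup>2 \<le> (2 * c * frobenius_norm Y)\<^sup>2" .
  moreover have "0 \<le> 2 * c * frobenius_norm Y" using \<open>c \<ge> 0\<close> frobenius_norm_nonneg[of Y] by simp
  ultimately show ?thesis unfolding X_def Y_def by (rule power2_le_imp_le)
qed

theorem mainTheorem18:
  fixes \<kappa> :: real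
  assumes "\<kappa> \<ge> 1"
  shows "\<exists>C::real. \<forall>(m::nat) (l::nat) (A::real mat) (B::real mat) (M::real mat) (lam::real).
    A \<in> carrier_mat m l \<longrightarrow> B \<in> carrier_mat m l \<longrightarrow>
    transpose_mat A * A = 1\<^sub>m l \<longrightarrow> transpose_mat B * B = 1\<^sub>m l \<longrightarrow>
    positive_definite_mat l M \<longrightarrow> lam > 0 \<longrightarrow>
    (\<forall>k. eigenvalue M k \<longrightarrow> lam \<le> k \<and> k \<le> \<kappa> * lam) \<longrightarrow>
    diagonal_mat (transpose_mat A * B) \<longrightarrow>
    (\<forall>i<l. (transpose_mat A * B) $$ (i,i) \<ge> 0) \<longrightarrow>
    frobenius_norm (A * M * transpose_mat A - B * M * transpose_mat B)
      \<le> C * lam * frobenius_norm (A * transpose_mat A - B * transpose_mat B)"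
proof (intro exI[of _ "2 * \<kappa>"] allI impI)
  fix m l :: nat and A B M :: "real mat" and lam :: real
  assume A: "A \<in> carrier_mat m l" and B: "B \<in> carrier_mat m l"
    and AA: "transpose_mat A * A = 1\<^sub>m l" and BB: "transpose_mat B * B = 1\<^sub>m l"
    and pd: "positive_definite_mat l M" and "lam > 0"
    and eig: "\<forall>k. eigenvalue M k \<longrightarrow> lam \<le> k \<and> k \<le> \<kappa> * lam"
    and D_diag: "diagonal_mat (transpose_mat A * B)"
    and D_nonneg: "\<forall>i<l. (transpose_mat A * B) $$ (i,i) \<ge> 0"
  have M: "M \<in> carrier_mat l l" and M_sym: "transpose_mat M = M"
    using pd unfolding positive_definite_mat_def by blast+
  have eig_le: "k \<le> \<kappa> * lam" if "eigenvalue M k" for k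
    using eig that by blast
  have rows: "(\<Sum>p<l. (M $$ (i, p))\<^sup>2) \<le> (\<kappa> * lam)\<^sup>2" if "i < l" for i
    by (rule positive_definite_row_sum_squares_le[OF pd eig_le that])
  have c: "\<kappa> * lam \<ge> 0" using \<open>\<kappa> \<ge> 1\<close> \<open>lam > 0\<close> by simp
  have D: "(transpose_mat A * B) $$ (i, i) \<ge> 0" if "i < l" for i
    using D_nonneg that by blast
  show "frobenius_norm (A * M * transpose_mat A - B * M * transpose_mat B)
      \<le> 2 * \<kappa> * lam * frobenius_norm (A * transpose_mat A - B * transpose_mat B)"
    using frobenius_norm_conj_diff_le[OF A B AA BB M M_sym rows c D_diag D]
    by (simp only: mult.assoc)
qed

end
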